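(* Let $\lambda\ge1$, $\mu\ge0$, let $\varphi(z)=1+B_1z+B_2z^2+\cdots$ be as in the context, and let $f(z)=z+\sum_{n\ge2}a_nz^n\in\mathcal N^{\mu,\lambda}_\Sigma(\varphi)$. Then $$|a_3-a_2^2|\le\frac{B_1}{2\lambda+\mu}.$$
   Context: Let $\mathbb U=\{z\in\mathbb C:|z|<1\}$ and let $\mathcal A$ be the class of functions $f(z)=z+\sum_{n\ge2}a_nz^n$ analytic in $\mathbb U$. $\Sigma$ denotes the class of bi-univalent functions: $f\in\mathcal A$ univalent in $\mathbb U$ such that the inverse $f^{-1}$ (defined near $0$) extends to an analytic univalent function on $\mathbb U$; this extension is denoted $g=f^{-1}$. For $F,G$ analytic in $\mathbb U$, $F\prec G$ means there is an analytic $w:\mathbb U\to\mathbb U$ with $w(0)=0$ and $F=G\circ w$. Throughout, $\varphi$ is analytic and univalent in $\mathbb U$ with $\Re\varphi>0$, $\varphi(0)=1$, $\varphi'(0)>0$, $\varphi(\mathbb U)$ starlike with respect to $1$ and symmetric with respect to the real axis, and $\varphi(z)=1+B_1z+B_2z^2+\cdots$ with all $B_j$ real and $B_1>0$. For $\lambda\ge1$, $\mu\ge0$, $\mathcal N^{\mu,\lambda}_\Sigma(\varphi)$ is the set of $f\in\Sigma$ with $(1-\lambda)(f(z)/z)^{\mu}+\lambda f'(z)(f(z)/z)^{\mu-1}\prec\varphi(z)$ and $(1-\lambda)(g(w)/w)^{\mu}+\lambda g'(w)(g(w)/w)^{\mu-1}\prec\varphi(w)$, where $g=f^{-1}$ and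 powers are principal branches equal to $1$ at the origin. *)

theory Defs
  imports "HOL-Analysis.Analysis"
begin

abbreviation unit_disk :: "complex set" where
  "unit_disk \<equiv> ball 0 1"

definition coef :: "(complex \<Rightarrow> complex) \<Rightarrow> nat \<Rightarrow> complex" where
  "coef f n = (deriv ^^ n) f 0 / of_nat (fact n)"

definition class_A :: "(complex \<Rightarrow> complex) \<Rightarrow> bool" where
  "class_A f \<longleftrightarrow> f holomorphic_on unit_disk \<and> f 0 = 0 \<and> deriv f 0 = 1"

definition inverse_ext :: "(complex \<Rightarrow> complex) \<Rightarrow> (complex \<Rightarrow> complex) \<Rightarrow> bool" where
  "inverse_ext f g \<longleftrightarrow> g holomorphic_on unit_disk \<and> inj_on g unit_disk \<and>
     (\<exists>r>0. \<forall>w\<in>ball 0 r. g w \<in> unit_disk \<and> f (g w) = w)"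

definition bi_univalent :: "(complex \<Rightarrow> complex) \<Rightarrow> bool" where
  "bi_univalent f \<longleftrightarrow> class_A f \<and> inj_on f unit_disk \<and> (\<exists>g. inverse_ext f g)"

definition subord :: "(complex \<Rightarrow> complex) \<Rightarrow> (complex \<Rightarrow> complex) \<Rightarrow> bool" where
  "subord F G \<longleftrightarrow> (\<exists>w. w holomorphic_on unit_disk \<and> w ` unit_disk \<subseteq> unit_disk \<and> w 0 = 0 \<and>
      (\<forall>z\<in>unit_disk. F z = G (w z)))"

text \<open>L is the holomorphic branch of log (f(z)/z) on the disk with L(0)=0,
  so that (f(z)/z)^a = exp (a * L z) is the branch equal to 1 at the origin.\<close>
definition log_branch :: "(complex \<Rightarrow> complex) \<Rightarrow> (complex \<Rightarrow> complex) \<Rightarrow> bool" where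
  "log_branch f L \<longleftrightarrow> L holomorphic_on unit_disk \<and> L 0 = 0 \<and>
      (\<forall>z\<in>unit_disk - {0}. exp (L z) = f z / z)"

definition N_expr :: "real \<Rightarrow> real \<Rightarrow> (complex \<Rightarrow> complex) \<Rightarrow> (complex \<Rightarrow> complex) \<Rightarrow> complex \<Rightarrow> complex" where
  "N_expr lam mu f L z =
     (1 - of_real lam) * exp (of_real mu * L z) + of_real lam * deriv f z * exp (of_real (mu - 1) * L z)"

definition phi_ok :: "(complex \<Rightarrow> complex) \<Rightarrow> bool" where
  "phi_ok phi \<longleftrightarrow> phi holomorphic_on unit_disk \<and> inj_on phi unit_disk \<and>
     (\<forall>z\<in>unit_disk. Re (phi z) > 0) \<and> phi 0 = 1 \<and>
     deriv phi 0 \<in> \<real> \<and> Re (deriv phi 0) > 0 \<and>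
     (\<forall>y\<in>phi ` unit_disk. closed_segment 1 y \<subseteq> phi ` unit_disk) \<and>
     (\<forall>y\<in>phi ` unit_disk. cnj y \<in> phi ` unit_disk) \<and>
     (\<forall>n. coef phi n \<in> \<real>)"

definition N_class :: "real \<Rightarrow> real \<Rightarrow> (complex \<Rightarrow> complex) \<Rightarrow> (complex \<Rightarrow> complex) \<Rightarrow> bool" where
  "N_class mu lam phi f \<longleftrightarrow> bi_univalent f \<and>
     (\<exists>g. inverse_ext f g \<and>
        (\<exists>L. log_branch f L \<and> subord (N_expr lam mu f L) phi) \<and>
        (\<exists>M. log_branch g M \<and> subord (N_expr lam mu g M) phi))"

end

theory Submission
  imports Defs "HOL-Complex_Analysis.Complex_Analysis"
begin

(* For a member h (f itself, or its inverse g) with log branch L of h(z)/z we compute the first two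
   coefficients of N_expr in terms of a2 = coef h 2, a3 = coef h 3; the subordination
   N_expr = phi o w gives the same coefficients as B1 w1 and B1 w2 + B2 w1^2 with |w2| <= 1
   (Cauchy estimate for self-maps of the disk).  Since f o g = id near 0, the coefficients of g
   are b2 = -a2 and b3 = 2 a2^2 - a3.  Subtracting the two second-order relations eliminates B2
   and yields 2 (mu + 2 lam) (a3 - a2^2) = B1 (w2 - v2), whence the bound. *)

lemma fps_compose_nth_low:
  fixes F G :: "'a :: comm_ring_1 fps"
  assumes "G $ 0 = 0"
  shows "(F oo G) $ 1 = F $ 1 * G $ 1"
    and "(F oo G) $ 2 = F $ 1 * G $ 2 + F $ 2 * (G $ 1)\<^sup>2"
    and "(F oo G) $ 3 = F $ 1 * G $ 3 + 2 * F $ 2 * G $ 1 * G $ 2 + F $ 3 * (G $ 1) ^ 3"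
  using assms by (simp_all add: fps_compose_nth fps_mult_nth numeral_3_eq_3 numeral_2_eq_2
      power2_eq_square power3_eq_cube algebra_simps)

lemma coef_conv_fps_expansion: "coef h n = fps_expansion h 0 $ n"
  by (simp add: coef_def fps_expansion_def)

lemma holomorphic_on_disk_has_fps_expansion:
  assumes "h holomorphic_on unit_disk"
  shows "h has_fps_expansion fps_expansion h 0"
  using assms by (intro has_fps_expansion_fps_expansion) auto

lemma has_fps_expansion_eq_on_ball:
  fixes h k :: "complex \<Rightarrow> complex" and r :: real
  assumes "h has_fps_expansion H" "k has_fps_expansion K"
    and "r > 0" "\<And>z. z \<in> ball 0 r \<Longrightarrow> h z = k z"
  shows "H = K"
proof -
  have "eventually (\<lambda>z. z \<in> ball 0 r) (nhds (0::complex))"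
    using \<open>r > 0\<close> by (intro eventually_nhds_in_open) auto
  then have "eventually (\<lambda>z. k z = h z) (nhds 0)"
    by eventually_elim (use assms(4) in auto)
  then have "k has_fps_expansion H"
    using assms(1) has_fps_expansion_cong by blast
  from this assms(2) show ?thesis by (rule fps_expansion_unique_complex)
qed

lemma has_fps_expansion_exp_compose:
  fixes L :: "complex \<Rightarrow> complex" and \<Lambda> :: "complex fps"
  assumes "L has_fps_expansion \<Lambda>" "\<Lambda> $ 0 = 0"
  shows "(\<lambda>z. exp (c * L z)) has_fps_expansion (fps_exp c oo \<Lambda>)"
  using has_fps_expansion_compose[OF has_fps_expansion_exp[of c] assms] by (simp add: o_def)

lemma fps_exp_compose_nth_low:
  fixes c :: complex and \<Lambda> :: "complex fps"
  assumes "\<Lambda> $ 0 = 0"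
  shows "(fps_exp c oo \<Lambda>) $ 0 = 1" "(fps_exp c oo \<Lambda>) $ 1 = c * \<Lambda> $ 1"
    "(fps_exp c oo \<Lambda>) $ 2 = c * \<Lambda> $ 2 + c\<^sup>2 * (\<Lambda> $ 1)\<^sup>2 / 2"
  using fps_compose_nth_low[OF assms, of "fps_exp c"] by (simp_all add: numeral_2_eq_2)

(* If exp (L z) = h z / z with L(0) = 0, then h'(0) = 1 and the first coefficients of L
   are l1 = a2 and l2 = a3 - a2^2 / 2; this follows from h = z * exp L as series. *)
lemma log_branch_coeffs:
  fixes h L :: "complex \<Rightarrow> complex" and H \<Lambda> :: "complex fps"
  assumes hol: "h holomorphic_on unit_disk" and h0: "h 0 = 0" and lb: "log_branch h L"
  defines "H \<equiv> fps_expansion h 0" and "\<Lambda> \<equiv> fps_expansion L 0"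
  shows "L has_fps_expansion \<Lambda>" "\<Lambda> $ 0 = 0" "H $ 1 = 1"
    and "\<Lambda> $ 1 = H $ 2" "\<Lambda> $ 2 = H $ 3 - (H $ 2)\<^sup>2 / 2"
proof -
  from lb have Lhol: "L holomorphic_on unit_disk" and L0: "L 0 = 0"
    and Lexp: "\<And>z. z \<in> unit_disk - {0} \<Longrightarrow> exp (L z) = h z / z"
    unfolding log_branch_def by auto
  show L: "L has_fps_expansion \<Lambda>"
    unfolding \<Lambda>_def by (rule holomorphic_on_disk_has_fps_expansion[OF Lhol])
  show L0': "\<Lambda> $ 0 = 0"
    using L0 by (simp add: \<Lambda>_def fps_expansion_def)
  have prod: "(\<lambda>z. z * exp (1 * L z)) has_fps_expansion fps_X * (fps_exp 1 oo \<Lambda>)"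
    by (intro has_fps_expansion_mult has_fps_expansion_fps_X has_fps_expansion_exp_compose L L0')
  have hexp: "h has_fps_expansion H"
    unfolding H_def by (rule holomorphic_on_disk_has_fps_expansion[OF hol])
  have "h z = z * exp (1 * L z)" if "z \<in> unit_disk" for z
    using Lexp[of z] that h0 L0 by (cases "z = 0") auto
  then have H: "H = fps_X * (fps_exp 1 oo \<Lambda>)"
    by (rule has_fps_expansion_eq_on_ball[OF hexp prod zero_less_one])
  have "H $ Suc n = (fps_exp 1 oo \<Lambda>) $ n" for n
    unfolding H by (simp add: fps_mult_fps_X_commute)
  from this[of 0] this[of 1] this[of 2] fps_exp_compose_nth_low[OF L0', of 1]
  show "H $ 1 = 1" "\<Lambda> $ 1 = H $ 2" "\<Lambda> $ 2 = H $ 3 - (H $ 2)\<^sup>2 / 2"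
    by (simp_all add: numeral_2_eq_2 numeral_3_eq_3)
qed

lemma N_expr_coeffs:
  fixes h L :: "complex \<Rightarrow> complex" and lam mu :: real
  assumes hol: "h holomorphic_on unit_disk" and h0: "h 0 = 0" and lb: "log_branch h L"
  defines "a2 \<equiv> coef h 2" and "a3 \<equiv> coef h 3"
  obtains N :: "complex fps" where "N_expr lam mu h L has_fps_expansion N"
    "N $ 1 = (of_real mu + of_real lam) * a2"
    "N $ 2 = (of_real mu + 2 * of_real lam) * (a3 + (of_real mu - 1) / 2 * a2\<^sup>2)"
proof -
  define H where "H = fps_expansion h 0"
  define \<Lambda> where "\<Lambda> = fps_expansion L 0"
  note L = log_branch_coeffs[OF hol h0 lb, folded H_def \<Lambda>_def]
  have a: "H $ 2 = a2" "H $ 3 = a3"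
    by (simp_all add: a2_def a3_def H_def coef_conv_fps_expansion)
  have hexp: "h has_fps_expansion H"
    unfolding H_def by (rule holomorphic_on_disk_has_fps_expansion[OF hol])
  have E: "(fps_exp c oo \<Lambda>) $ 0 = 1" "(fps_exp c oo \<Lambda>) $ 1 = c * a2"
    "(fps_exp c oo \<Lambda>) $ 2 = c * a3 + (c\<^sup>2 - c) / 2 * a2\<^sup>2" for c
    using fps_exp_compose_nth_low[OF L(2), of c] L(3-5) a by (simp_all add: field_simps)
  have D: "fps_deriv H $ 0 = 1" "fps_deriv H $ 1 = 2 * a2" "fps_deriv H $ 2 = 3 * a3"
    using L(3) a by (simp_all add: numeral_2_eq_2 numeral_3_eq_3)
  define N where "N = fps_const (1 - of_real lam) * (fps_exp (of_real mu) oo \<Lambda>)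
      + fps_const (of_real lam) * fps_deriv H * (fps_exp (of_real (mu - 1)) oo \<Lambda>)"
  have expansion: "N_expr lam mu h L has_fps_expansion N"
    unfolding N_def N_expr_def
    by (intro has_fps_expansion_add has_fps_expansion_mult has_fps_expansion_const
        has_fps_expansion_deriv has_fps_expansion_exp_compose hexp L(1,2))
  have prod_nth: "(A * B) $ 1 = A $ 0 * B $ 1 + A $ 1 * B $ 0"
    "(A * B) $ 2 = A $ 0 * B $ 2 + A $ 1 * B $ 1 + A $ 2 * B $ 0" for A B :: "complex fps"
    by (simp_all add: fps_mult_nth numeral_2_eq_2)
  have N1: "N $ 1 = (of_real mu + of_real lam) * a2"
    unfolding N_def by (simp only: fps_add_nth fps_mult_left_const_nth prod_nth E D)
      (simp add: algebra_simps)
  have N2: "N $ 2 = (of_real mu + 2 * of_real lam) * (a3 + (of_real mu - 1) / 2 * a2\<^sup>2)"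
    unfolding N_def by (simp only: fps_add_nth fps_mult_left_const_nth prod_nth E D)
      (simp add: field_simps power2_eq_square)
  show ?thesis by (rule that[OF expansion N1 N2])
qed

(* Cauchy estimate: a holomorphic self-map of the unit disk has all coefficients of modulus at most 1. *)
lemma self_map_coef_bound:
  assumes hol: "w holomorphic_on unit_disk" and maps: "w ` unit_disk \<subseteq> unit_disk"
  shows "cmod (coef w n) \<le> 1"
proof -
  define x where "x = cmod (coef w n)"
  have le: "x * r ^ n \<le> 1" if r: "0 < r" "r < 1" for r :: real
  proof -
    have sub: "cball (0::complex) r \<subseteq> unit_disk" using r by auto
    have "cmod ((deriv ^^ n) w 0) \<le> fact n * 1 / r ^ n"
    proof (rule Cauchy_inequality)
      show "w holomorphic_on ball 0 r"
        using hol sub ball_subset_cball holomorphic_on_subset by blast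
      show "continuous_on (cball 0 r) w"
        using holomorphic_on_imp_continuous_on[OF hol] sub continuous_on_subset by blast
      fix y :: complex assume "cmod (0 - y) = r"
      then have "y \<in> unit_disk" using r by simp
      then show "cmod (w y) \<le> 1" using maps by fastforce
    qed (fact r)
    then show ?thesis
      using r by (simp add: x_def coef_def norm_divide field_simps)
  qed
  have "((\<lambda>r. x * r ^ n) \<longlongrightarrow> x * 1 ^ n) (at_left (1::real))"
    by (intro tendsto_intros)
  moreover have "eventually (\<lambda>r. x * r ^ n \<le> 1) (at_left (1::real))"
    unfolding eventually_at_left_field by (rule exI[of _ 0]) (auto intro: le)
  ultimately have "x * 1 ^ n \<le> 1" by (rule tendsto_upperbound) simp
  then show ?thesis by (simp add: x_def)
qed

(* If F is subordinate to phi, F = phi o w, so the coefficients of F are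
   B1 w1 and B1 w2 + B2 w1^2 where w1, w2 are coefficients of the Schwarz function, |w2| <= 1. *)
lemma subordination_coeffs:
  fixes F phi :: "complex \<Rightarrow> complex" and N :: "complex fps"
  assumes sub: "subord F phi" and phol: "phi holomorphic_on unit_disk"
    and Fexp: "F has_fps_expansion N"
  obtains w1 w2 where "cmod w2 \<le> 1" "N $ 1 = coef phi 1 * w1"
    "N $ 2 = coef phi 1 * w2 + coef phi 2 * w1\<^sup>2"
proof -
  from sub obtain w where whol: "w holomorphic_on unit_disk" and maps: "w ` unit_disk \<subseteq> unit_disk"
    and w0: "w 0 = 0" and eq: "\<And>z. z \<in> unit_disk \<Longrightarrow> F z = phi (w z)"
    unfolding subord_def by blast
  define W where "W = fps_expansion w 0"
  define P where "P = fps_expansion phi 0"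
  have W0: "W $ 0 = 0" using w0 by (simp add: W_def fps_expansion_def)
  have "(phi \<circ> w) has_fps_expansion (P oo W)"
    unfolding P_def W_def using W0[unfolded W_def]
    by (intro has_fps_expansion_compose holomorphic_on_disk_has_fps_expansion phol whol)
  then have "N = P oo W"
    by (rule has_fps_expansion_eq_on_ball[OF Fexp _ zero_less_one]) (simp add: eq)
  then have "N $ 1 = coef phi 1 * coef w 1" "N $ 2 = coef phi 1 * coef w 2 + coef phi 2 * (coef w 1)\<^sup>2"
    using fps_compose_nth_low[OF W0, of P] by (simp_all add: P_def W_def coef_conv_fps_expansion)
  with self_map_coef_bound[OF whol maps] show ?thesis by (rule that)
qed

lemma inverse_ext_zero:
  assumes "inj_on f unit_disk" "f 0 = 0" "inverse_ext f g"
  shows "g 0 = 0"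
proof -
  from assms(3) obtain r where "r > 0" "\<forall>w\<in>ball 0 r. g w \<in> unit_disk \<and> f (g w) = w"
    unfolding inverse_ext_def by blast
  then have "g 0 \<in> unit_disk" "f (g 0) = 0" by auto
  with assms(1,2) show ?thesis by (metis centre_in_ball inj_on_contraD zero_less_one)
qed

(* If f(0) = 0, f'(0) = 1 and f o g = id near 0, then g has coefficients
   b2 = -a2 and b3 = 2 a2^2 - a3 (coefficient comparison in F oo G = X). *)
lemma inverse_coeffs:
  fixes f g :: "complex \<Rightarrow> complex"
  assumes fhol: "f holomorphic_on unit_disk" and ghol: "g holomorphic_on unit_disk"
    and f1: "deriv f 0 = 1" and g0: "g 0 = 0"
    and "r > 0" and inv: "\<And>w. w \<in> ball 0 r \<Longrightarrow> f (g w) = w"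
  shows "coef g 2 = - coef f 2" and "coef g 3 = 2 * (coef f 2)\<^sup>2 - coef f 3"
proof -
  define F where "F = fps_expansion f 0"
  define G where "G = fps_expansion g 0"
  have G0: "G $ 0 = 0" using g0 by (simp add: G_def fps_expansion_def)
  have "(f \<circ> g) has_fps_expansion (F oo G)"
    unfolding F_def G_def using G0[unfolded G_def]
    by (intro has_fps_expansion_compose holomorphic_on_disk_has_fps_expansion fhol ghol)
  then have FG: "F oo G = fps_X"
    by (rule has_fps_expansion_eq_on_ball[OF _ has_fps_expansion_fps_X \<open>r > 0\<close>]) (simp add: inv)
  have F1: "F $ 1 = 1" using f1 by (simp add: F_def fps_expansion_def)
  note c = fps_compose_nth_low[OF G0, of F, unfolded FG]
  from c(1) F1 have G1: "G $ 1 = 1" by simp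
  from c(2) F1 G1 have G2: "G $ 2 = - F $ 2" by (simp add: eq_neg_iff_add_eq_0)
  from c(3) F1 G1 G2 have "G $ 3 = 2 * (F $ 2)\<^sup>2 - F $ 3"
    by (simp add: power2_eq_square algebra_simps eq_neg_iff_add_eq_0)
  with G2 show "coef g 2 = - coef f 2" "coef g 3 = 2 * (coef f 2)\<^sup>2 - coef f 3"
    by (simp_all add: F_def G_def coef_conv_fps_expansion)
qed

(* The algebraic core: the first- and second-order relations for f and for its inverse
   force v1 = -w1, and their difference bounds a3 - a2^2 by B1 / K. *)
lemma coefficient_pair_bound:
  fixes a2 a3 c d B2 w1 w2 v1 v2 :: complex and b K :: real
  assumes "b > 0" "K > 0" "cmod w2 \<le> 1" "cmod v2 \<le> 1"
    and f1: "c * a2 = of_real b * w1" and g1: "c * (- a2) = of_real b * v1"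
    and f2: "of_real K * (a3 + d * a2\<^sup>2) = of_real b * w2 + B2 * w1\<^sup>2"
    and g2: "of_real K * ((2 * a2\<^sup>2 - a3) + d * (- a2)\<^sup>2) = of_real b * v2 + B2 * v1\<^sup>2"
  shows "cmod (a3 - a2\<^sup>2) \<le> b / K"
proof -
  have "of_real b * v1 = of_real b * (- w1)" using f1 g1 by simp
  then have v1: "v1 = - w1" using \<open>b > 0\<close> by (simp only: mult_cancel_left) simp
  have "of_real K * (a3 + d * a2\<^sup>2) - of_real K * ((2 * a2\<^sup>2 - a3) + d * (- a2)\<^sup>2)
      = (of_real b * w2 + B2 * w1\<^sup>2) - (of_real b * v2 + B2 * v1\<^sup>2)"
    using f2 g2 by simp
  then have "2 * of_real K * (a3 - a2\<^sup>2) = of_real b * (w2 - v2)"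
    unfolding v1 by (simp add: algebra_simps power2_eq_square)
  then have "2 * K * cmod (a3 - a2\<^sup>2) = b * cmod (w2 - v2)"
    using assms(1,2) by (metis abs_of_pos norm_mult norm_numeral norm_of_real)
  also have "\<dots> \<le> b * 2"
    using norm_triangle_ineq4[of w2 v2] assms(1,3,4) by (intro mult_left_mono) auto
  finally show ?thesis using assms(2) by (simp add: field_simps)
qed

lemma N_class_coeff_relations:
  fixes h L phi :: "complex \<Rightarrow> complex" and lam mu :: real
  assumes "h holomorphic_on unit_disk" "h 0 = 0" "log_branch h L"
    and "subord (N_expr lam mu h L) phi" "phi holomorphic_on unit_disk"
  obtains w1 w2 where "cmod w2 \<le> 1"
    "(of_real mu + of_real lam) * coef h 2 = coef phi 1 * w1"
    "(of_real mu + 2 * of_real lam) * (coef h 3 + (of_real mu - 1) / 2 * (coef h 2)\<^sup>2)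
       = coef phi 1 * w2 + coef phi 2 * w1\<^sup>2"
proof -
  obtain N :: "complex fps" where Nexp: "N_expr lam mu h L has_fps_expansion N"
      and N: "N $ 1 = (of_real mu + of_real lam) * coef h 2"
      "N $ 2 = (of_real mu + 2 * of_real lam) * (coef h 3 + (of_real mu - 1) / 2 * (coef h 2)\<^sup>2)"
    by (rule N_expr_coeffs[OF assms(1-3)])
  obtain w1 w2 where "cmod w2 \<le> 1" "N $ 1 = coef phi 1 * w1"
      "N $ 2 = coef phi 1 * w2 + coef phi 2 * w1\<^sup>2"
    by (rule subordination_coeffs[OF assms(4,5) Nexp])
  with N show ?thesis by (intro that[of w2 w1]) simp_all
qed

theorem corollary3p1:
  fixes lam mu :: real and phi f :: "complex \<Rightarrow> complex"
  assumes "lam \<ge> 1" and "mu \<ge> 0" and "phi_ok phi" and "N_class mu lam phi f"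
  shows "cmod (coef f 3 - (coef f 2)\<^sup>2) \<le> Re (deriv phi 0) / (2 * lam + mu)"
proof -
  from assms(3) have phol: "phi holomorphic_on unit_disk" and B1pos: "Re (deriv phi 0) > 0"
    and B1: "coef phi 1 = of_real (Re (deriv phi 0))"
    unfolding phi_ok_def coef_def by (auto simp: complex_is_Real_iff)
  from assms(4) obtain g L M where "bi_univalent f" and inv: "inverse_ext f g"
    and lbL: "log_branch f L" and subL: "subord (N_expr lam mu f L) phi"
    and lbM: "log_branch g M" and subM: "subord (N_expr lam mu g M) phi"
    unfolding N_class_def by blast
  then have fhol: "f holomorphic_on unit_disk" and f0: "f 0 = 0" and f1: "deriv f 0 = 1"
    and injf: "inj_on f unit_disk"
    unfolding bi_univalent_def class_A_def by auto
  from inv obtain r where ghol: "g holomorphic_on unit_disk" and "r > 0"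
    and gr: "\<And>w. w \<in> ball 0 r \<Longrightarrow> f (g w) = w"
    unfolding inverse_ext_def by blast
  have g0: "g 0 = 0" by (rule inverse_ext_zero[OF injf f0 inv])
  obtain w1 w2 where f_rel: "cmod w2 \<le> 1"
      "(of_real mu + of_real lam) * coef f 2 = coef phi 1 * w1"
      "(of_real mu + 2 * of_real lam) * (coef f 3 + (of_real mu - 1) / 2 * (coef f 2)\<^sup>2)
         = coef phi 1 * w2 + coef phi 2 * w1\<^sup>2"
    by (rule N_class_coeff_relations[OF fhol f0 lbL subL phol])
  obtain v1 v2 where g_rel: "cmod v2 \<le> 1"
      "(of_real mu + of_real lam) * coef g 2 = coef phi 1 * v1"
      "(of_real mu + 2 * of_real lam) * (coef g 3 + (of_real mu - 1) / 2 * (coef g 2)\<^sup>2)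
         = coef phi 1 * v2 + coef phi 2 * v1\<^sup>2"
    by (rule N_class_coeff_relations[OF ghol g0 lbM subM phol])
  note g_coeffs = inverse_coeffs[OF fhol ghol f1 g0 \<open>r > 0\<close> gr]
  have "cmod (coef f 3 - (coef f 2)\<^sup>2) \<le> Re (deriv phi 0) / (mu + 2 * lam)"
    by (rule coefficient_pair_bound[where c = "of_real mu + of_real lam" and d = "(of_real mu - 1) / 2"])
       (use assms(1,2) B1pos B1 f_rel g_rel g_coeffs in auto)
  then show ?thesis by (simp add: add.commute)
qed

end
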